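(* Let $\Phi:\{0,1\}^n\to\{0,1\}^n$, $\mu\in\{0,1\}^n$ and $\rho\in P_n$. Then: a) $\overline{W}[\Phi^\rho(\mu,\cdot)]=\overline{W}(Or_\rho(\mu))$; b) $\underline{W}[\Phi^\rho(\mu,\cdot)]\subset\underline{W}(Or_\rho(\mu))$; c) $\overline{W}[\omega_\rho(\mu)]=\overline{W}(\omega_\rho(\mu))$; d) $\underline{W}[\omega_\rho(\mu)]\subset\underline{W}(\omega_\rho(\mu))$.
   Context: Let $\mathbf{B}=\{0,1\}$ (discrete topology), $n\ge1$, $\Phi:\mathbf{B}^n\to\mathbf{B}^n$. For $\nu\in\mathbf{B}^n$: $\Phi^\nu_i(\mu)=\mu_i$ if $\nu_i=0$, $=\Phi_i(\mu)$ if $\nu_i=1$; $\Phi^{\alpha^0\dots\alpha^k}=\Phi^{\alpha^k}\circ\cdots\circ\Phi^{\alpha^0}$. A sequence $(\alpha^k)_{k\in\mathbf{N}}$ in $\mathbf{B}^n$ is progressive if each $\{k:\alpha^k_i=1\}$ is infinite. $Seq$ = strictly increasing real sequences unbounded above. $P_n$ = functions $\rho:\mathbf{R}\to\mathbf{B}^n$ with $\rho(t_k)=\alpha^k$, $\rho(t)=0$ for $t\notin\{t_k\}$, $\alpha$ progressive, $(t_k)\in Seq$. Orbit: $\Phi^\rho(\mu,t)=\mu$ for $t<t_0$, $=\Phi^{\alpha^0\dots\alpha^k}(\mu)$ for $t\in[t_k,t_{k+1})$; $Or_\rho(\mu)=\{\Phi^\rho(\mu,t):t\in\mathbf{R}\}$.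 $\omega_\rho(\mu)=\{\mu':\exists(s_k)\in Seq,\ \Phi^\rho(\mu,s_k)=\mu'$ for all large $k\}$. For a nonempty set $A\subset\mathbf{B}^n$: $\overline{W}(A)=\{\mu':\exists\rho'\in P_n,\ \omega_{\rho'}(\mu')\subset A\}$ and $\underline{W}(A)=\{\mu':\forall\rho'\in P_n,\ \omega_{\rho'}(\mu')\subset A\}$. Basins of the orbit and $\omega$-limit set: $\overline{W}[\Phi^\rho(\mu,\cdot)]=\{\mu':\exists\rho'\in P_n,\exists t',\forall t\ge t',\ \Phi^{\rho'}(\mu',t)=\Phi^\rho(\mu,t)\}$, $\underline{W}[\Phi^\rho(\mu,\cdot)]=\{\mu':\forall\rho'\in P_n,\exists t',\forall t\ge t',\ \Phi^{\rho'}(\mu',t)=\Phi^\rho(\mu,t)\}$, $\overline{W}[\omega_\rho(\mu)]=\{\mu':\exists\rho'\in P_n,\ \omega_{\rho'}(\mu')=\omega_\rho(\mu)\}$, $\underline{W}[\omega_\rho(\mu)]=\{\mu':\forall\rho'\in P_n,\ \omega_{\rho'}(\mu')=\omega_\rho(\mu)\}$. *)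

theory Defs
  imports Main "HOL-Library.Infinite_Set" Complex_Main
begin

text \<open>Points of B^n are functions 'n => bool over a finite index type 'n
  (True = 1, False = 0). The zero vector is (\<lambda>_. False).\<close>

type_synonym 'n state = "'n \<Rightarrow> bool"

definition upd :: "('n state \<Rightarrow> 'n state) \<Rightarrow> 'n state \<Rightarrow> 'n state \<Rightarrow> 'n state" where
  "upd \<Phi> \<nu> \<mu> = (\<lambda>i. if \<nu> i then \<Phi> \<mu> i else \<mu> i)"

fun iterc :: "('n state \<Rightarrow> 'n state) \<Rightarrow> (nat \<Rightarrow> 'n state) \<Rightarrow> 'n state \<Rightarrow> nat \<Rightarrow> 'n state" where
  "iterc \<Phi> \<alpha> \<mu> 0 = upd \<Phi> (\<alpha> 0) \<mu>"
| "iterc \<Phi> \<alpha> \<mu> (Suc k) = upd \<Phi> (\<alpha> (Suc k)) (iterc \<Phi> \<alpha> \<mu> k)"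

definition progressive :: "(nat \<Rightarrow> 'n state) \<Rightarrow> bool" where
  "progressive \<alpha> \<longleftrightarrow> (\<forall>i. infinite {k. \<alpha> k i})"

definition Seq :: "(nat \<Rightarrow> real) set" where
  "Seq = {t. strict_mono t \<and> (\<forall>M. \<exists>k. M < t k)}"

definition is_rep :: "(real \<Rightarrow> 'n state) \<Rightarrow> (nat \<Rightarrow> 'n state) \<Rightarrow> (nat \<Rightarrow> real) \<Rightarrow> bool" where
  "is_rep \<rho> \<alpha> t \<longleftrightarrow> progressive \<alpha> \<and> t \<in> Seq \<and> (\<forall>k. \<rho> (t k) = \<alpha> k)
      \<and> (\<forall>s. s \<notin> range t \<longrightarrow> \<rho> s = (\<lambda>_. False))"

definition Pn :: "(real \<Rightarrow> 'n state) set" where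
  "Pn = {\<rho>. \<exists>\<alpha> t. is_rep \<rho> \<alpha> t}"

definition orbit_rep :: "('n state \<Rightarrow> 'n state) \<Rightarrow> (nat \<Rightarrow> 'n state) \<Rightarrow> (nat \<Rightarrow> real)
    \<Rightarrow> 'n state \<Rightarrow> real \<Rightarrow> 'n state" where
  "orbit_rep \<Phi> \<alpha> t \<mu> \<tau> =
     (if \<tau> < t 0 then \<mu> else iterc \<Phi> \<alpha> \<mu> (THE k. t k \<le> \<tau> \<and> \<tau> < t (Suc k)))"

text \<open>The orbit Phi^rho(mu, tau), computed from a representation (alpha, t) of rho
  (the orbit does not depend on the choice of representation).\<close>
definition orbit :: "('n state \<Rightarrow> 'n state) \<Rightarrow> (real \<Rightarrow> 'n state) \<Rightarrow> 'n state \<Rightarrow> real \<Rightarrow> 'n state" where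
  "orbit \<Phi> \<rho> \<mu> \<tau> = (let (\<alpha>, t) = (SOME p. is_rep \<rho> (fst p) (snd p)) in orbit_rep \<Phi> \<alpha> t \<mu> \<tau>)"

definition Or :: "('n state \<Rightarrow> 'n state) \<Rightarrow> (real \<Rightarrow> 'n state) \<Rightarrow> 'n state \<Rightarrow> 'n state set" where
  "Or \<Phi> \<rho> \<mu> = range (orbit \<Phi> \<rho> \<mu>)"

definition omega :: "('n state \<Rightarrow> 'n state) \<Rightarrow> (real \<Rightarrow> 'n state) \<Rightarrow> 'n state \<Rightarrow> 'n state set" where
  "omega \<Phi> \<rho> \<mu> = {\<mu>'. \<exists>s \<in> Seq. \<exists>K. \<forall>k\<ge>K. orbit \<Phi> \<rho> \<mu> (s k) = \<mu>'}"

definition Wup :: "('n state \<Rightarrow> 'n state) \<Rightarrow> 'n state set \<Rightarrow> 'n state set" where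
  "Wup \<Phi> A = {\<mu>'. \<exists>\<rho>'\<in>Pn. omega \<Phi> \<rho>' \<mu>' \<subseteq> A}"

definition Wdown :: "('n state \<Rightarrow> 'n state) \<Rightarrow> 'n state set \<Rightarrow> 'n state set" where
  "Wdown \<Phi> A = {\<mu>'. \<forall>\<rho>'\<in>Pn. omega \<Phi> \<rho>' \<mu>' \<subseteq> A}"

definition Wup_orb :: "('n state \<Rightarrow> 'n state) \<Rightarrow> (real \<Rightarrow> 'n state) \<Rightarrow> 'n state set" where
  "Wup_orb \<Phi> x = {\<mu>'. \<exists>\<rho>'\<in>Pn. \<exists>t'. \<forall>t\<ge>t'. orbit \<Phi> \<rho>' \<mu>' t = x t}"

definition Wdown_orb :: "('n state \<Rightarrow> 'n state) \<Rightarrow> (real \<Rightarrow> 'n state) \<Rightarrow> 'n state set" where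
  "Wdown_orb \<Phi> x = {\<mu>'. \<forall>\<rho>'\<in>Pn. \<exists>t'. \<forall>t\<ge>t'. orbit \<Phi> \<rho>' \<mu>' t = x t}"

definition Wup_lim :: "('n state \<Rightarrow> 'n state) \<Rightarrow> 'n state set \<Rightarrow> 'n state set" where
  "Wup_lim \<Phi> S = {\<mu>'. \<exists>\<rho>'\<in>Pn. omega \<Phi> \<rho>' \<mu>' = S}"

definition Wdown_lim :: "('n state \<Rightarrow> 'n state) \<Rightarrow> 'n state set \<Rightarrow> 'n state set" where
  "Wdown_lim \<Phi> S = {\<mu>'. \<forall>\<rho>'\<in>Pn. omega \<Phi> \<rho>' \<mu>' = S}"

end

theory Submission
  imports Defs
begin

text \<open>Two orbits that agree from some time on have the same \<omega>-limit set, and every \<omega>-limit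
  set is a nonempty subset of its orbit because the state space is finite. This gives (b), (d)
  and one half of (a) and (c). For the other halves, pick a point y of the \<omega>-limit set of \<rho>'
  from \<mu>' that also lies on the orbit of \<rho> from \<mu>. It is reached from \<mu>' after finitely many
  updates of \<rho>'; performing those updates just before the time at which \<rho> reaches y and then
  continuing with \<rho> gives a progressive \<rho>'' whose orbit from \<mu>' eventually coincides with the
  orbit of \<rho> from \<mu>.\<close>

fun iter_upd :: "('n state \<Rightarrow> 'n state) \<Rightarrow> (nat \<Rightarrow> 'n state) \<Rightarrow> 'n state \<Rightarrow> nat \<Rightarrow> 'n state" where
  "iter_upd \<Phi> \<alpha> \<mu> 0 = \<mu>"
| "iter_upd \<Phi> \<alpha> \<mu> (Suc k) = upd \<Phi> (\<alpha> k) (iter_upd \<Phi> \<alpha> \<mu> k)"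

lemma iterc_eq_iter_upd: "iterc \<Phi> \<alpha> \<mu> k = iter_upd \<Phi> \<alpha> \<mu> (Suc k)"
  by (induction k) auto

lemma iter_upd_add:
  "iter_upd \<Phi> \<alpha> \<mu> (a + b) = iter_upd \<Phi> (\<lambda>k. \<alpha> (k + a)) (iter_upd \<Phi> \<alpha> \<mu> a) b"
  by (induction b) (auto simp: add.commute)

lemma iter_upd_cong: "(\<And>k. k < m \<Longrightarrow> \<alpha> k = \<beta> k) \<Longrightarrow> iter_upd \<Phi> \<alpha> \<mu> m = iter_upd \<Phi> \<beta> \<mu> m"
  by (induction m) auto

lemma upd_False [simp]: "upd \<Phi> (\<lambda>_. False) \<mu> = \<mu>"
  by (simp add: upd_def)

lemma SeqD:
  assumes "t \<in> Seq"
  shows "strict_mono t" and "\<exists>k. M < t k"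
  using assms by (auto simp: Seq_def)

lemma Seq_eventually_ge:
  assumes "s \<in> Seq"
  shows "\<exists>k0. \<forall>k\<ge>k0. c \<le> s k"
proof -
  obtain k0 where "c < s k0" using SeqD(2)[OF assms] by blast
  then have "\<forall>k\<ge>k0. c \<le> s k"
    using strict_mono_less_eq[OF SeqD(1)[OF assms]] by (meson less_le_trans less_imp_le)
  then show ?thesis by blast
qed

definition n_events :: "(nat \<Rightarrow> real) \<Rightarrow> real \<Rightarrow> nat" where
  "n_events t \<tau> = (LEAST k. \<tau> < t k)"

lemma n_events:
  assumes "t \<in> Seq"
  shows "\<tau> < t (n_events t \<tau>)" and "k < n_events t \<tau> \<Longrightarrow> t k \<le> \<tau>"
proof -
  obtain k0 where "\<tau> < t k0" using SeqD(2)[OF assms] by blast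
  then show "\<tau> < t (n_events t \<tau>)" unfolding n_events_def by (rule LeastI)
  show "k < n_events t \<tau> \<Longrightarrow> t k \<le> \<tau>" unfolding n_events_def using not_less_Least by force
qed

lemma n_events_eqI:
  assumes "\<tau> < t n" and "\<And>k. k < n \<Longrightarrow> t k \<le> \<tau>"
  shows "n_events t \<tau> = n"
  unfolding n_events_def
proof (rule Least_equality)
  fix y assume "\<tau> < t y"
  then show "n \<le> y" using assms(2) by (meson not_le not_less)
qed fact

lemma orbit_rep_eq_iter_upd:
  assumes "t \<in> Seq"
  shows "orbit_rep \<Phi> \<alpha> t \<mu> \<tau> = iter_upd \<Phi> \<alpha> \<mu> (n_events t \<tau>)"
proof (cases "\<tau> < t 0")
  case True
  then have "n_events t \<tau> = 0" by (intro n_events_eqI) auto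
  then show ?thesis using True by (simp add: orbit_rep_def)
next
  case False
  then obtain k0 where k0: "n_events t \<tau> = Suc k0"
    using n_events(1)[OF assms, where \<tau>=\<tau>] by (cases "n_events t \<tau>") auto
  have "(THE k. t k \<le> \<tau> \<and> \<tau> < t (Suc k)) = k0"
  proof (rule the_equality)
    show "t k0 \<le> \<tau> \<and> \<tau> < t (Suc k0)" using n_events[OF assms, where \<tau>=\<tau>] k0 by auto
    fix k assume k: "t k \<le> \<tau> \<and> \<tau> < t (Suc k)"
    have "t j \<le> \<tau>" if "j < Suc k" for j
      using k that strict_mono_less_eq[OF SeqD(1)[OF assms]] by (meson less_Suc_eq_le order_trans)
    then have "n_events t \<tau> = Suc k" using k by (intro n_events_eqI) auto
    then show "k = k0" using k0 by simp
  qed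
  then show ?thesis using False k0 by (simp add: orbit_rep_def iterc_eq_iter_upd)
qed

subsection \<open>Independence of the representation\<close>

text \<open>A representation of \<rho> may place zero updates anywhere, so representations are not
  unique; the orbit is nevertheless determined by \<rho>: it applies the nonzero values of \<rho> up to
  time \<tau> in increasing order of time.\<close>
definition orbit_support_fold ::
    "('n state \<Rightarrow> 'n state) \<Rightarrow> (real \<Rightarrow> 'n state) \<Rightarrow> 'n state \<Rightarrow> real \<Rightarrow> 'n state" where
  "orbit_support_fold \<Phi> \<rho> \<mu> \<tau> = foldl (\<lambda>m \<nu>. upd \<Phi> \<nu> m) \<mu>
     (map \<rho> (sorted_list_of_set {s. \<rho> s \<noteq> (\<lambda>_. False) \<and> s \<le> \<tau>}))"

lemma sorted_list_of_set_insert_greatest: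
  fixes A :: "'a::linorder set"
  assumes "finite A" and "\<forall>a\<in>A. a < x"
  shows "sorted_list_of_set (insert x A) = sorted_list_of_set A @ [x]"
  using assms by (subst sorted_list_of_set_insert) (auto intro!: sorted_insort_is_snoc less_imp_le)

lemma is_rep_support: "is_rep \<rho> \<alpha> t \<Longrightarrow> \<rho> s \<noteq> (\<lambda>_. False) \<Longrightarrow> s \<in> range t"
  unfolding is_rep_def by blast

lemma iter_upd_eq_support_fold:
  assumes r: "is_rep \<rho> \<alpha> t"
  shows "iter_upd \<Phi> \<alpha> \<mu> n = foldl (\<lambda>m \<nu>. upd \<Phi> \<nu> m) \<mu>
     (map \<rho> (sorted_list_of_set {s. \<rho> s \<noteq> (\<lambda>_. False) \<and> s < t n}))"
proof -
  have sm: "strict_mono t" and \<rho>t: "\<And>k. \<rho> (t k) = \<alpha> k"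
    using r by (auto simp: is_rep_def Seq_def)
  have support: "{s. \<rho> s \<noteq> (\<lambda>_. False) \<and> s < t n} = t ` {k. k < n \<and> \<alpha> k \<noteq> (\<lambda>_. False)}" for n
  proof safe
    fix s assume s: "\<rho> s \<noteq> (\<lambda>_. False)" "s < t n"
    then obtain k where "s = t k" using is_rep_support[OF r] by blast
    then show "s \<in> t ` {k. k < n \<and> \<alpha> k \<noteq> (\<lambda>_. False)}"
      using s strict_mono_less[OF sm] \<rho>t by auto
  qed (use strict_mono_less[OF sm] \<rho>t in auto)
  show ?thesis
  proof (induction n)
    case 0
    then show ?case by (simp add: support)
  next
    case (Suc n)
    let ?A = "t ` {k. k < n \<and> \<alpha> k \<noteq> (\<lambda>_. False)}"
    have "\<forall>a\<in>?A. a < t n" using strict_mono_less[OF sm] by auto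
    then have snoc: "sorted_list_of_set (insert (t n) ?A) = sorted_list_of_set ?A @ [t n]"
      by (intro sorted_list_of_set_insert_greatest) auto
    show ?case
    proof (cases "\<alpha> n = (\<lambda>_. False)")
      case True
      then have "{k. k < Suc n \<and> \<alpha> k \<noteq> (\<lambda>_. False)} = {k. k < n \<and> \<alpha> k \<noteq> (\<lambda>_. False)}"
        using less_Suc_eq by auto
      then show ?thesis using Suc True by (simp add: support)
    next
      case False
      then have "{k. k < Suc n \<and> \<alpha> k \<noteq> (\<lambda>_. False)} = insert n {k. k < n \<and> \<alpha> k \<noteq> (\<lambda>_. False)}"
        by auto
      then show ?thesis using Suc snoc \<rho>t by (simp add: support)
    qed
  qed
qed

lemma orbit_rep_eq_support_fold:
  assumes r: "is_rep \<rho> \<alpha> t"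
  shows "orbit_rep \<Phi> \<alpha> t \<mu> \<tau> = orbit_support_fold \<Phi> \<rho> \<mu> \<tau>"
proof -
  have tS: "t \<in> Seq" using r by (auto simp: is_rep_def)
  have "{s. \<rho> s \<noteq> (\<lambda>_. False) \<and> s < t (n_events t \<tau>)} = {s. \<rho> s \<noteq> (\<lambda>_. False) \<and> s \<le> \<tau>}"
  proof safe
    fix s assume s: "\<rho> s \<noteq> (\<lambda>_. False)" "s < t (n_events t \<tau>)"
    then obtain k where k: "s = t k" using is_rep_support[OF r] by blast
    then have "k < n_events t \<tau>" using s strict_mono_less[OF SeqD(1)[OF tS]] by auto
    then show "s \<le> \<tau>" using n_events(2)[OF tS] k by auto
  next
    fix s assume "s \<le> \<tau>"
    then show "s < t (n_events t \<tau>)" using n_events(1)[OF tS, where \<tau>=\<tau>] by auto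
  qed
  then show ?thesis
    unfolding orbit_support_fold_def orbit_rep_eq_iter_upd[OF tS] iter_upd_eq_support_fold[OF r]
    by simp
qed

lemma orbit_eq_orbit_rep:
  assumes r: "is_rep \<rho> \<alpha> t"
  shows "orbit \<Phi> \<rho> \<mu> \<tau> = orbit_rep \<Phi> \<alpha> t \<mu> \<tau>"
proof -
  define p where "p = (SOME p. is_rep \<rho> (fst p) (snd p))"
  have "is_rep \<rho> (fst p) (snd p)"
    unfolding p_def by (rule someI[of _ "(\<alpha>, t)"]) (simp add: r)
  then show ?thesis
    using orbit_rep_eq_support_fold[OF r] orbit_rep_eq_support_fold
    by (simp add: orbit_def p_def[symmetric] split_def Let_def)
qed

lemma orbit_eq_iter_upd:
  assumes "is_rep \<rho> \<alpha> t"
  shows "orbit \<Phi> \<rho> \<mu> \<tau> = iter_upd \<Phi> \<alpha> \<mu> (n_events t \<tau>)"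
  using assms by (simp add: orbit_eq_orbit_rep orbit_rep_eq_iter_upd is_rep_def)

lemma omega_subset_Or: "omega \<Phi> \<rho> \<mu> \<subseteq> Or \<Phi> \<rho> \<mu>"
  unfolding omega_def Or_def by blast

lemma omega_eq_if_eventually_eq:
  assumes "\<forall>\<tau>\<ge>c. orbit \<Phi> \<rho>' \<mu>' \<tau> = orbit \<Phi> \<rho> \<mu> \<tau>"
  shows "omega \<Phi> \<rho>' \<mu>' = omega \<Phi> \<rho> \<mu>"
proof -
  have transfer: "\<exists>K. \<forall>k\<ge>K. g (s k) = y"
    if s: "s \<in> Seq" and f: "\<forall>k\<ge>K. f (s k) = y" and fg: "\<forall>\<tau>\<ge>c. f \<tau> = g \<tau>"
    for s K y and f g :: "real \<Rightarrow> 'a state"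
  proof -
    obtain k0 where "\<forall>k\<ge>k0. c \<le> s k" using Seq_eventually_ge[OF s] by blast
    then have "\<forall>k\<ge>max K k0. g (s k) = y" using f fg by auto
    then show ?thesis by blast
  qed
  have sym: "\<forall>\<tau>\<ge>c. orbit \<Phi> \<rho> \<mu> \<tau> = orbit \<Phi> \<rho>' \<mu>' \<tau>" using assms by simp
  show ?thesis
  proof (intro set_eqI iffI)
    fix y assume "y \<in> omega \<Phi> \<rho>' \<mu>'"
    then obtain s K where "s \<in> Seq" "\<forall>k\<ge>K. orbit \<Phi> \<rho>' \<mu>' (s k) = y" by (auto simp: omega_def)
    with transfer[OF this assms] show "y \<in> omega \<Phi> \<rho> \<mu>" by (auto simp: omega_def)
  next
    fix y assume "y \<in> omega \<Phi> \<rho> \<mu>"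
    then obtain s K where "s \<in> Seq" "\<forall>k\<ge>K. orbit \<Phi> \<rho> \<mu> (s k) = y" by (auto simp: omega_def)
    with transfer[OF this sym] show "y \<in> omega \<Phi> \<rho>' \<mu>'" by (auto simp: omega_def)
  qed
qed

lemma omega_nonempty:
  fixes \<Phi> :: "'n::finite state \<Rightarrow> 'n state"
  shows "omega \<Phi> \<rho> \<mu> \<noteq> {}"
proof -
  define f where "f = (\<lambda>k::nat. orbit \<Phi> \<rho> \<mu> (real k))"
  obtain y where S: "infinite (f -` {y})"
    using inf_img_fin_dom[of f UNIV] by auto
  define s where "s = (\<lambda>j. real (enumerate (f -` {y}) j))"
  have sm: "strict_mono (enumerate (f -` {y}))" using strict_mono_enumerate S by blast
  have "s \<in> Seq"
    unfolding Seq_def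
  proof safe
    show "strict_mono s" using sm by (simp add: s_def strict_mono_def)
    fix M :: real
    obtain k :: nat where "M < real k" using reals_Archimedean2 by blast
    moreover have "k \<le> enumerate (f -` {y}) k" using seq_suble[OF sm] .
    ultimately show "\<exists>k. M < s k" unfolding s_def by (meson of_nat_le_iff less_le_trans)
  qed
  moreover have "\<forall>k\<ge>0. orbit \<Phi> \<rho> \<mu> (s k) = y"
    using enumerate_in_set[OF S] by (auto simp: s_def f_def)
  ultimately show ?thesis unfolding omega_def by blast
qed

subsection \<open>Splicing two orbits\<close>

definition seq_splice :: "nat \<Rightarrow> nat \<Rightarrow> (nat \<Rightarrow> 'a) \<Rightarrow> (nat \<Rightarrow> 'a) \<Rightarrow> nat \<Rightarrow> 'a" where
  "seq_splice m j f g k = (if k < m then f k else g (k - m + j))"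

lemma seq_splice_shift [simp]: "seq_splice m j f g (k + m) = g (k + j)"
  by (simp add: seq_splice_def)

lemma progressive_seq_splice:
  assumes "progressive \<alpha>"
  shows "progressive (seq_splice m j \<beta> \<alpha>)"
  unfolding progressive_def infinite_nat_iff_unbounded_le
proof (intro allI)
  fix i M
  obtain n where n: "n \<ge> M + j" "\<alpha> n i"
    using assms unfolding progressive_def infinite_nat_iff_unbounded_le by blast
  then have "seq_splice m j \<beta> \<alpha> (n - j + m) i" and "n - j + m \<ge> M"
    using seq_splice_shift[of m j \<beta> \<alpha> "n - j"] by auto
  then show "\<exists>k\<ge>M. k \<in> {k. seq_splice m j \<beta> \<alpha> k i}" by blast
qed

text \<open>The first m event times are squeezed into [t j - m, t j), the later ones are those of t
  from t j on.\<close>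
lemma Seq_seq_splice:
  assumes "t \<in> Seq"
  shows "seq_splice m j (\<lambda>k. t j - real (m - k)) t \<in> Seq"
proof -
  let ?t = "seq_splice m j (\<lambda>k. t j - real (m - k)) t"
  have sm: "strict_mono t" using SeqD(1)[OF assms] .
  have "?t k < ?t (Suc k)" for k
  proof (cases "Suc k < m")
    case False
    then have "k < m \<Longrightarrow> k = m - 1" and "\<not> k < m \<Longrightarrow> Suc k - m + j = Suc (k - m + j)" by auto
    then show ?thesis using False strict_mono_less[OF sm] by (auto simp: seq_splice_def)
  qed (simp add: seq_splice_def)
  moreover have "\<exists>k. M < ?t k" for M
  proof -
    obtain k where "M < t k" using SeqD(2)[OF assms] by blast
    moreover have "t k \<le> ?t (k + m)" using strict_mono_less_eq[OF sm] by simp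
    ultimately show ?thesis by (meson less_le_trans)
  qed
  ultimately show ?thesis unfolding Seq_def strict_mono_Suc_iff by blast
qed

lemma is_rep_of_Seq:
  assumes "progressive \<alpha>" and "t \<in> Seq"
  shows "is_rep (\<lambda>\<tau>. if \<tau> \<in> range t then \<alpha> (inv t \<tau>) else (\<lambda>_. False)) \<alpha> t"
  using assms strict_mono_imp_inj_on[OF SeqD(1)[OF assms(2)]] by (auto simp: is_rep_def)

lemma n_events_seq_splice:
  assumes "t \<in> Seq" and "t j \<le> \<tau>"
  shows "j \<le> n_events t \<tau>"
    and "n_events (seq_splice m j (\<lambda>k. t j - real (m - k)) t) \<tau> = n_events t \<tau> - j + m"
proof -
  show jn: "j \<le> n_events t \<tau>"
  proof (rule ccontr)
    assume "\<not> j \<le> n_events t \<tau>"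
    then have "t (n_events t \<tau>) < t j" using strict_mono_less[OF SeqD(1)[OF assms(1)]] by simp
    then show False using n_events(1)[OF assms(1), where \<tau>=\<tau>] assms(2) by simp
  qed
  show "n_events (seq_splice m j (\<lambda>k. t j - real (m - k)) t) \<tau> = n_events t \<tau> - j + m"
  proof (rule n_events_eqI)
    show "\<tau> < seq_splice m j (\<lambda>k. t j - real (m - k)) t (n_events t \<tau> - j + m)"
      using n_events(1)[OF assms(1)] seq_splice_shift[of m j _ t "n_events t \<tau> - j"] jn by simp
    show "seq_splice m j (\<lambda>k. t j - real (m - k)) t k \<le> \<tau>" if "k < n_events t \<tau> - j + m" for k
      using that jn assms(2) n_events(2)[OF assms(1), of "k - m + j" \<tau>]
      by (auto simp: seq_splice_def)
  qed
qed

lemma iter_upd_seq_splice: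
  assumes "j \<le> n" and "iter_upd \<Phi> \<alpha>' \<mu>' m = iter_upd \<Phi> \<alpha> \<mu> j"
  shows "iter_upd \<Phi> (seq_splice m j \<alpha>' \<alpha>) \<mu>' (n - j + m) = iter_upd \<Phi> \<alpha> \<mu> n"
proof -
  have "iter_upd \<Phi> (seq_splice m j \<alpha>' \<alpha>) \<mu>' (m + (n - j))
      = iter_upd \<Phi> (\<lambda>k. \<alpha> (k + j)) (iter_upd \<Phi> (seq_splice m j \<alpha>' \<alpha>) \<mu>' m) (n - j)"
    by (simp add: iter_upd_add)
  also have "iter_upd \<Phi> (seq_splice m j \<alpha>' \<alpha>) \<mu>' m = iter_upd \<Phi> \<alpha> \<mu> j"
    using assms(2) iter_upd_cong[of m "seq_splice m j \<alpha>' \<alpha>" \<alpha>'] by (simp add: seq_splice_def)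
  also have "iter_upd \<Phi> (\<lambda>k. \<alpha> (k + j)) (iter_upd \<Phi> \<alpha> \<mu> j) (n - j) = iter_upd \<Phi> \<alpha> \<mu> n"
    using assms(1) iter_upd_add[of \<Phi> \<alpha> \<mu> j "n - j"] by simp
  finally show ?thesis by (simp add: add.commute)
qed

lemma orbit_splice_eventually:
  assumes "\<rho> \<in> Pn" and "\<rho>' \<in> Pn" and "y \<in> Or \<Phi> \<rho>' \<mu>'" and "y \<in> Or \<Phi> \<rho> \<mu>"
  shows "\<exists>\<rho>''\<in>Pn. \<exists>c. \<forall>\<tau>\<ge>c. orbit \<Phi> \<rho>'' \<mu>' \<tau> = orbit \<Phi> \<rho> \<mu> \<tau>"
proof -
  obtain \<alpha> t where r: "is_rep \<rho> \<alpha> t" using assms(1) by (auto simp: Pn_def)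
  obtain \<alpha>' t' where r': "is_rep \<rho>' \<alpha>' t'" using assms(2) by (auto simp: Pn_def)
  have tS: "t \<in> Seq" using r by (simp add: is_rep_def)
  obtain m where ym: "y = iter_upd \<Phi> \<alpha>' \<mu>' m"
    using assms(3) orbit_eq_iter_upd[OF r'] by (auto simp: Or_def)
  obtain j where yj: "y = iter_upd \<Phi> \<alpha> \<mu> j"
    using assms(4) orbit_eq_iter_upd[OF r] by (auto simp: Or_def)
  define \<alpha>'' where "\<alpha>'' = seq_splice m j \<alpha>' \<alpha>"
  define t'' where "t'' = seq_splice m j (\<lambda>k. t j - real (m - k)) t"
  define \<rho>'' where "\<rho>'' = (\<lambda>\<tau>. if \<tau> \<in> range t'' then \<alpha>'' (inv t'' \<tau>) else (\<lambda>_. False))"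
  have "t'' \<in> Seq" unfolding t''_def using tS by (rule Seq_seq_splice)
  then have r'': "is_rep \<rho>'' \<alpha>'' t''"
    unfolding \<rho>''_def \<alpha>''_def using r by (intro is_rep_of_Seq progressive_seq_splice) (auto simp: is_rep_def)
  have "orbit \<Phi> \<rho>'' \<mu>' \<tau> = orbit \<Phi> \<rho> \<mu> \<tau>" if "t j \<le> \<tau>" for \<tau>
  proof -
    have "orbit \<Phi> \<rho>'' \<mu>' \<tau> = iter_upd \<Phi> \<alpha>'' \<mu>' (n_events t \<tau> - j + m)"
      unfolding orbit_eq_iter_upd[OF r''] t''_def n_events_seq_splice(2)[OF tS that] ..
    also have "\<dots> = iter_upd \<Phi> \<alpha> \<mu> (n_events t \<tau>)"
      unfolding \<alpha>''_def using n_events_seq_splice(1)[OF tS that] ym yj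
      by (intro iter_upd_seq_splice) simp_all
    finally show ?thesis by (simp add: orbit_eq_iter_upd[OF r])
  qed
  moreover have "\<rho>'' \<in> Pn" using r'' by (auto simp: Pn_def)
  ultimately show ?thesis by blast
qed

lemma Wup_mono: "A \<subseteq> B \<Longrightarrow> Wup \<Phi> A \<subseteq> Wup \<Phi> B"
  unfolding Wup_def by blast

lemma Wdown_mono: "A \<subseteq> B \<Longrightarrow> Wdown \<Phi> A \<subseteq> Wdown \<Phi> B"
  unfolding Wdown_def by blast

lemma Wup_lim_subset_Wup: "Wup_lim \<Phi> S \<subseteq> Wup \<Phi> S"
  unfolding Wup_lim_def Wup_def by blast

lemma Wdown_lim_subset_Wdown: "Wdown_lim \<Phi> S \<subseteq> Wdown \<Phi> S"
  unfolding Wdown_lim_def Wdown_def by blast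

lemma Wup_orb_subset_Wup_lim: "Wup_orb \<Phi> (orbit \<Phi> \<rho> \<mu>) \<subseteq> Wup_lim \<Phi> (omega \<Phi> \<rho> \<mu>)"
  unfolding Wup_orb_def Wup_lim_def using omega_eq_if_eventually_eq by blast

lemma Wdown_orb_subset_Wdown_lim: "Wdown_orb \<Phi> (orbit \<Phi> \<rho> \<mu>) \<subseteq> Wdown_lim \<Phi> (omega \<Phi> \<rho> \<mu>)"
  unfolding Wdown_orb_def Wdown_lim_def using omega_eq_if_eventually_eq by blast

lemma Wup_Or_subset_Wup_orb:
  fixes \<Phi> :: "'n::finite state \<Rightarrow> 'n state"
  assumes "\<rho> \<in> Pn"
  shows "Wup \<Phi> (Or \<Phi> \<rho> \<mu>) \<subseteq> Wup_orb \<Phi> (orbit \<Phi> \<rho> \<mu>)"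
proof
  fix \<mu>' assume "\<mu>' \<in> Wup \<Phi> (Or \<Phi> \<rho> \<mu>)"
  then obtain \<rho>' where \<rho>': "\<rho>' \<in> Pn" "omega \<Phi> \<rho>' \<mu>' \<subseteq> Or \<Phi> \<rho> \<mu>" by (auto simp: Wup_def)
  obtain y where "y \<in> omega \<Phi> \<rho>' \<mu>'" using omega_nonempty by blast
  then have "y \<in> Or \<Phi> \<rho>' \<mu>'" and "y \<in> Or \<Phi> \<rho> \<mu>" using \<rho>'(2) omega_subset_Or by blast+
  then have "\<exists>\<rho>''\<in>Pn. \<exists>c. \<forall>\<tau>\<ge>c. orbit \<Phi> \<rho>'' \<mu>' \<tau> = orbit \<Phi> \<rho> \<mu> \<tau>"
    by (rule orbit_splice_eventually[OF assms \<rho>'(1)])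
  then show "\<mu>' \<in> Wup_orb \<Phi> (orbit \<Phi> \<rho> \<mu>)" by (simp add: Wup_orb_def)
qed

text \<open>Parts (a) and (c) follow from the cycle of inclusions
  Wup_orb \<subseteq> Wup_lim \<subseteq> Wup \<omega> \<subseteq> Wup Or \<subseteq> Wup_orb.\<close>
theorem theorem54:
  fixes \<Phi> :: "('n::finite) state \<Rightarrow> 'n state" and \<mu> :: "'n state" and \<rho> :: "real \<Rightarrow> 'n state"
  assumes "\<rho> \<in> Pn"
  shows "Wup_orb \<Phi> (orbit \<Phi> \<rho> \<mu>) = Wup \<Phi> (Or \<Phi> \<rho> \<mu>)
    \<and> Wdown_orb \<Phi> (orbit \<Phi> \<rho> \<mu>) \<subseteq> Wdown \<Phi> (Or \<Phi> \<rho> \<mu>)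
    \<and> Wup_lim \<Phi> (omega \<Phi> \<rho> \<mu>) = Wup \<Phi> (omega \<Phi> \<rho> \<mu>)
    \<and> Wdown_lim \<Phi> (omega \<Phi> \<rho> \<mu>) \<subseteq> Wdown \<Phi> (omega \<Phi> \<rho> \<mu>)"
proof -
  have "Wup_orb \<Phi> (orbit \<Phi> \<rho> \<mu>) \<subseteq> Wup_lim \<Phi> (omega \<Phi> \<rho> \<mu>)"
    and "Wup_lim \<Phi> (omega \<Phi> \<rho> \<mu>) \<subseteq> Wup \<Phi> (omega \<Phi> \<rho> \<mu>)"
    and "Wup \<Phi> (omega \<Phi> \<rho> \<mu>) \<subseteq> Wup \<Phi> (Or \<Phi> \<rho> \<mu>)"
    and "Wup \<Phi> (Or \<Phi> \<rho> \<mu>) \<subseteq> Wup_orb \<Phi> (orbit \<Phi> \<rho> \<mu>)"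
    by (rule Wup_orb_subset_Wup_lim Wup_lim_subset_Wup Wup_mono[OF omega_subset_Or]
        Wup_Or_subset_Wup_orb[OF assms])+
  moreover have "Wdown_orb \<Phi> (orbit \<Phi> \<rho> \<mu>) \<subseteq> Wdown \<Phi> (Or \<Phi> \<rho> \<mu>)"
    by (meson order_trans Wdown_orb_subset_Wdown_lim Wdown_lim_subset_Wdown
        Wdown_mono omega_subset_Or)
  ultimately show ?thesis using Wdown_lim_subset_Wdown by blast
qed

end
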